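(* Let $f\in\mathbb{Q}[x]$ be a non-zero polynomial of degree $n$ and let $g\in\mathbb{Q}[x]$ be such that $\gcd(f,g)$ and $f/\gcd(f,g)$ are relatively prime. Assume that $g(\xi)\ge 0$ for every real root $\xi$ of $f$. Then there exist $N\in\mathbb{N}$, positive rational weights $\omega_1,\dots,\omega_N\in\mathbb{Q}_{>0}$ and polynomials $h_1,\dots,h_N\in\mathbb{Q}[x]$, each of degree $<n$, such that $$h:=\sum_{i=1}^N \omega_i h_i^2 \quad\text{satisfies}\quad h\equiv g \pmod f.$$ *)

theory Defs
  imports "HOL-Computational_Algebra.Polynomial_Factorial" "HOL-Computational_Algebra.Field_as_Ring"
begin

end

theory Submission
  imports Defs "HOL-Analysis.Analysis"
begin

text \<open>Let \<open>e = f / gcd f g\<close>; by the coprimality hypothesis \<open>g\<close> is strictly positive at the real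
  roots of \<open>e\<close>. Every real polynomial that is nonnegative on \<open>\<real>\<close> is a coefficientwise limit of
  rational weighted sums of squares (split off its minimum, which leaves a double root, and induct
  on the degree), and the error of a good approximation is absorbed by a small multiple of the
  fixed sum of squares \<open>W = \<Sum> (x\<^sup>2\<^sup>i + x\<^sup>2\<^sup>j)\<close>. Hence a rational \<open>p\<close> with \<open>p - r W \<ge> 0\<close> on \<open>\<real>\<close>
  is a rational weighted sum of squares. Adding a large multiple of \<open>e\<^sup>2 (1 + x\<^sup>2)\<^sup>k\<close> to \<open>g\<close> produces
  such a \<open>p \<equiv> g (mod e)\<close>; multiplying it by the square of an element that is \<open>1\<close> modulo \<open>e\<close> and \<open>0\<close>
  modulo \<open>gcd f g\<close> gives \<open>p \<equiv> g (mod f)\<close>, and reducing the \<open>h\<^sub>i\<close> modulo \<open>f\<close> bounds their degrees.\<close>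

inductive weighted_sos :: "rat poly \<Rightarrow> bool" where
  weighted_sos_0: "weighted_sos 0"
| weighted_sos_add_square: "weighted_sos p \<Longrightarrow> c > 0 \<Longrightarrow> weighted_sos (p + smult c (h\<^sup>2))"

lemma weighted_sos_add:
  assumes "weighted_sos p" "weighted_sos q"
  shows "weighted_sos (p + q)"
  using assms(2)
proof (induction q rule: weighted_sos.induct)
  case weighted_sos_0
  then show ?case using assms(1) by simp
next
  case (weighted_sos_add_square q c h)
  then show ?case
    using weighted_sos.weighted_sos_add_square[of "p + q" c h] by (simp add: add.assoc)
qed

lemma weighted_sos_smult_square: "c \<ge> 0 \<Longrightarrow> weighted_sos (smult c (h\<^sup>2))"
  using weighted_sos_add_square[OF weighted_sos_0, of c h] by (cases "c = 0") (auto intro: weighted_sos_0)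

lemma weighted_sos_const: "c \<ge> 0 \<Longrightarrow> weighted_sos [:c:]"
  using weighted_sos_smult_square[of c 1] by simp

lemma weighted_sos_sum:
  "(\<And>i. i \<in> A \<Longrightarrow> weighted_sos (F i)) \<Longrightarrow> weighted_sos (sum F A)"
  by (induction A rule: infinite_finite_induct) (auto intro: weighted_sos_0 weighted_sos_add)

lemma weighted_sos_square_mult: "weighted_sos p \<Longrightarrow> weighted_sos (k\<^sup>2 * p)"
proof (induction p rule: weighted_sos.induct)
  case weighted_sos_0
  then show ?case by (simp add: weighted_sos.weighted_sos_0)
next
  case (weighted_sos_add_square p c h)
  have "k\<^sup>2 * (p + smult c (h\<^sup>2)) = k\<^sup>2 * p + smult c ((k * h)\<^sup>2)"
    by (simp add: algebra_simps power_mult_distrib)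
  then show ?case using weighted_sos_add_square by (auto intro: weighted_sos.weighted_sos_add_square)
qed

lemma weighted_sos_cross_term:
  assumes "\<bar>e\<bar> \<le> 2 * r"
  shows "weighted_sos (smult e (a * b) + smult r (a\<^sup>2 + b\<^sup>2))"
proof -
  define b' where "b' = smult (if e \<ge> 0 then 1 else -1) b"
  have cross: "smult e (a * b) = smult \<bar>e\<bar> (a * b')" and square: "b'\<^sup>2 = b\<^sup>2"
    by (auto simp: b'_def power2_eq_square)
  have "(a + b')\<^sup>2 = a\<^sup>2 + b'\<^sup>2 + smult 2 (a * b')"
    by (simp add: power2_eq_square algebra_simps flip: numeral_mult_conv_smult)
  then have "smult e (a * b) + smult r (a\<^sup>2 + b\<^sup>2) =
      smult (\<bar>e\<bar> / 2) ((a + b')\<^sup>2) + smult (r - \<bar>e\<bar> / 2) (a\<^sup>2) + smult (r - \<bar>e\<bar> / 2) (b\<^sup>2)"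
    unfolding cross square[symmetric] by (simp add: smult_add_right smult_diff_left algebra_simps)
  then show ?thesis
    using assms by (auto intro!: weighted_sos_add weighted_sos_smult_square)
qed

lemma weighted_sos_sum_repr:
  assumes "weighted_sos p"
  shows "\<exists>(N::nat) (\<omega>::nat \<Rightarrow> rat) (h::nat \<Rightarrow> rat poly).
           (\<forall>i\<in>{1..N}. \<omega> i > 0) \<and> p = (\<Sum>i=1..N. smult (\<omega> i) ((h i)\<^sup>2))"
  using assms
proof (induction p rule: weighted_sos.induct)
  case weighted_sos_0
  show ?case by (rule exI[of _ 0]) simp
next
  case (weighted_sos_add_square p c h)
  then obtain N \<omega> and hs :: "nat \<Rightarrow> rat poly"
    where pos: "\<forall>i\<in>{1..N}. \<omega> i > 0" and p: "p = (\<Sum>i=1..N. smult (\<omega> i) ((hs i)\<^sup>2))"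
    by blast
  define \<omega>' where "\<omega>' = fun_upd \<omega> (Suc N) c"
  define hs' where "hs' = fun_upd hs (Suc N) h"
  have "p + smult c (h\<^sup>2) = (\<Sum>i=1..Suc N. smult (\<omega>' i) ((hs' i)\<^sup>2))"
    unfolding p \<omega>'_def hs'_def by (auto intro!: sum.cong)
  then show ?case
    using pos weighted_sos_add_square(2) by (intro exI[of _ "Suc N"] exI[of _ \<omega>'] exI) (auto simp: \<omega>'_def)
qed

abbreviation of_rat_poly :: "rat poly \<Rightarrow> 'a::field_char_0 poly" where
  "of_rat_poly \<equiv> map_poly of_rat"

lemma coeff_of_rat_poly [simp]: "coeff (of_rat_poly p) n = of_rat (coeff p n)"
  by (simp add: coeff_map_poly)

lemma degree_of_rat_poly [simp]: "degree (of_rat_poly p) = degree p"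
  by (simp add: degree_map_poly)

lemma of_rat_poly_eq_0_iff [simp]: "of_rat_poly p = 0 \<longleftrightarrow> p = 0"
  by (auto simp: poly_eq_iff)

lemma of_rat_poly_add [simp]: "of_rat_poly (p + q) = of_rat_poly p + of_rat_poly q"
  by (rule poly_eqI) (simp add: of_rat_add)

lemma of_rat_poly_diff [simp]: "of_rat_poly (p - q) = of_rat_poly p - of_rat_poly q"
  by (rule poly_eqI) (simp add: of_rat_diff)

lemma of_rat_poly_mult [simp]: "of_rat_poly (p * q) = of_rat_poly p * of_rat_poly q"
  by (rule poly_eqI) (simp add: coeff_mult of_rat_sum of_rat_mult)

lemma of_rat_poly_smult [simp]: "of_rat_poly (smult c p) = smult (of_rat c) (of_rat_poly p)"
  by (rule poly_eqI) (simp add: of_rat_mult)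

lemma of_rat_poly_pCons [simp]: "of_rat_poly (pCons a p) = pCons (of_rat a) (of_rat_poly p)"
  by (rule poly_eqI) (simp add: coeff_pCons split: nat.splits)

lemma of_rat_poly_power [simp]: "of_rat_poly (p ^ k) = of_rat_poly p ^ k"
  by (induction k) simp_all

lemma poly_nonneg_attains_min:
  fixes s :: "real poly"
  assumes nonneg: "\<And>x. poly s x \<ge> 0" and deg: "degree s > 0"
  obtains t where "\<And>x. poly s t \<le> poly s x"
proof -
  have "filterlim (\<lambda>x. norm (poly s x)) at_top at_infinity"
    using filterlim_poly_at_infinity[OF deg] by (rule filterlim_at_infinity_imp_norm_at_top)
  then have "eventually (\<lambda>x. norm (poly s x) \<ge> poly s 0) at_infinity"
    by (simp add: filterlim_at_top)
  then obtain R where R: "\<And>x. norm x \<ge> R \<Longrightarrow> poly s x \<ge> poly s 0"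
    unfolding eventually_at_infinity using nonneg by (metis real_norm_def abs_of_nonneg)
  have "\<exists>t\<in>cball 0 \<bar>R\<bar>. \<forall>y\<in>cball 0 \<bar>R\<bar>. poly s t \<le> poly s y"
    by (intro continuous_attains_inf) (auto intro: continuous_intros)
  then obtain t where t: "\<And>y. y \<in> cball 0 \<bar>R\<bar> \<Longrightarrow> poly s t \<le> poly s y"
    by blast
  then have "poly s t \<le> poly s 0" by simp
  then have "poly s t \<le> poly s x" for x
    using t[of x] R[of x] by (cases "x \<in> cball 0 \<bar>R\<bar>") force+
  then show ?thesis by (rule that)
qed

lemma linear_square_dvd_of_double_root:
  fixes p :: "'a::idom poly"
  assumes "poly p t = 0" "poly (pderiv p) t = 0"
  shows "[:-t, 1:]\<^sup>2 dvd p"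
proof -
  from assms(1) obtain q where q: "p = [:-t, 1:] * q"
    by (auto simp: poly_eq_0_iff_dvd elim: dvdE)
  have "pderiv p = [:-t, 1:] * pderiv q + q"
    unfolding q pderiv_mult by (simp add: pderiv_pCons)
  then have "poly q t = 0" using assms(2) by simp
  then obtain q' where q': "q = [:-t, 1:] * q'"
    by (auto simp: poly_eq_0_iff_dvd elim: dvdE)
  have "p = [:-t, 1:]\<^sup>2 * q'"
    unfolding q q' power2_eq_square by (rule mult.assoc[symmetric])
  then show ?thesis by simp
qed

text \<open>Split off a global minimum \<open>\<mu>\<close> attained at \<open>t\<close>: the remainder \<open>s - \<mu>\<close> has a
  double root at \<open>t\<close>.\<close>
lemma nonneg_poly_decompose:
  fixes s :: "real poly"
  assumes nonneg: "\<And>x. poly s x \<ge> 0" and deg: "degree s > 0"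
  obtains \<mu> t s' where "\<mu> \<ge> 0" "\<And>x. poly s' x \<ge> 0" "degree s = degree s' + 2"
    "s = [:\<mu>:] + [:-t, 1:]\<^sup>2 * s'"
proof -
  obtain t where min: "\<And>x. poly s t \<le> poly s x"
    using poly_nonneg_attains_min[OF nonneg deg] by blast
  define \<mu> where "\<mu> = poly s t"
  have "poly (pderiv s) t = 0"
    by (rule DERIV_local_min[OF poly_DERIV zero_less_one]) (auto intro: min)
  then have "[:-t, 1:]\<^sup>2 dvd s - [:\<mu>:]"
    by (intro linear_square_dvd_of_double_root) (simp_all add: \<mu>_def pderiv_diff pderiv_pCons)
  then obtain s' where s': "s = [:\<mu>:] + [:-t, 1:]\<^sup>2 * s'"
    by (auto elim!: dvdE simp: algebra_simps)
  have "s' \<noteq> 0" using s' deg by auto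
  then have "degree s = degree s' + 2"
    unfolding s' by (subst degree_add_eq_right) (simp_all add: degree_mult_eq degree_linear_power)
  have ps: "poly s x = \<mu> + (x - t)\<^sup>2 * poly s' x" for x
    unfolding s' by simp
  have off_t: "poly s' x \<ge> 0" if "x \<noteq> t" for x
    using min[of x] ps[of x] that by (simp add: \<mu>_def zero_le_mult_iff)
  have "eventually (\<lambda>x. poly s' x \<ge> 0) (at t)"
    unfolding eventually_at_filter by (auto intro: always_eventually off_t)
  then have "poly s' t \<ge> 0"
    by (intro tendsto_lowerbound[OF isContD[OF poly_isCont]]) simp_all
  then have "poly s' x \<ge> 0" for x
    using off_t by (cases "x = t") auto
  moreover have "\<mu> \<ge> 0" using nonneg by (simp add: \<mu>_def)
  ultimately show ?thesis using that s' \<open>degree s = degree s' + 2\<close> by blast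
qed

lemma rat_tendsto_from_above:
  fixes c :: real
  obtains q :: "nat \<Rightarrow> rat" where "\<And>n. of_rat (q n) > c" "(\<lambda>n. of_rat (q n)) \<longlonglongrightarrow> c"
proof -
  have "\<exists>q::rat. c < of_rat q \<and> of_rat q < c + inverse (real (Suc n))" for n
    using Rats_dense_in_real[of c "c + inverse (real (Suc n))"] by (auto elim: Rats_cases)
  then obtain q :: "nat \<Rightarrow> rat" where q: "\<And>n. c < of_rat (q n) \<and> of_rat (q n) < c + inverse (real (Suc n))"
    by metis
  have "(\<lambda>n. c + inverse (real (Suc n))) \<longlonglongrightarrow> c"
    using tendsto_add[OF tendsto_const LIMSEQ_inverse_real_of_nat, of c] by simp
  then have "(\<lambda>n. of_rat (q n)) \<longlonglongrightarrow> c"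
    by (rule tendsto_sandwich[rotated 2, OF tendsto_const]) (use q in \<open>auto intro: always_eventually less_imp_le\<close>)
  then show ?thesis using q that by blast
qed

definition coeffwise_tendsto :: "(nat \<Rightarrow> 'a::real_normed_field poly) \<Rightarrow> 'a poly \<Rightarrow> bool" where
  "coeffwise_tendsto P p \<longleftrightarrow> (\<forall>i. (\<lambda>n. coeff (P n) i) \<longlonglongrightarrow> coeff p i)"

lemma coeffwise_tendsto_const: "coeffwise_tendsto (\<lambda>n. p) p"
  by (simp add: coeffwise_tendsto_def)

lemma coeffwise_tendsto_const_poly:
  "(\<lambda>n. c n) \<longlonglongrightarrow> c' \<Longrightarrow> coeffwise_tendsto (\<lambda>n. [:c n:]) [:c':]"
  by (auto simp: coeffwise_tendsto_def coeff_pCons split: nat.splits)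

lemma coeffwise_tendsto_add:
  "coeffwise_tendsto P p \<Longrightarrow> coeffwise_tendsto Q q \<Longrightarrow> coeffwise_tendsto (\<lambda>n. P n + Q n) (p + q)"
  by (auto simp: coeffwise_tendsto_def intro: tendsto_add)

lemma coeffwise_tendsto_mult:
  "coeffwise_tendsto P p \<Longrightarrow> coeffwise_tendsto Q q \<Longrightarrow> coeffwise_tendsto (\<lambda>n. P n * Q n) (p * q)"
  unfolding coeffwise_tendsto_def coeff_mult by (auto intro!: tendsto_sum tendsto_mult)

lemma coeffwise_tendsto_power:
  "coeffwise_tendsto P p \<Longrightarrow> coeffwise_tendsto (\<lambda>n. P n ^ k) (p ^ k)"
  by (induction k) (simp_all add: coeffwise_tendsto_const coeffwise_tendsto_mult)

definition rat_sos_approximable :: "real poly \<Rightarrow> bool" where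
  "rat_sos_approximable s \<longleftrightarrow> (\<exists>P. (\<forall>n. weighted_sos (P n) \<and> degree (P n) \<le> degree s)
      \<and> coeffwise_tendsto (\<lambda>n. of_rat_poly (P n)) s)"

lemma rat_sos_approximable_const:
  assumes "c \<ge> 0"
  shows "rat_sos_approximable [:c:]"
proof -
  obtain q where q: "\<And>n. of_rat (q n) > c" "(\<lambda>n. of_rat (q n)) \<longlonglongrightarrow> c"
    using rat_tendsto_from_above by blast
  have "(0::real) < of_rat (q n)" for n using q(1)[of n] assms by linarith
  then have "q n \<ge> 0" for n by (simp add: less_imp_le)
  then show ?thesis
    using q(2) unfolding rat_sos_approximable_def
    by (intro exI[of _ "\<lambda>n. [:q n:]"]) (simp add: weighted_sos_const coeffwise_tendsto_const_poly)
qed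

lemma rat_sos_approximable_add_square_mult:
  assumes "\<mu> \<ge> 0" "rat_sos_approximable s'"
    and s: "s = [:\<mu>:] + [:-t, 1:]\<^sup>2 * s'" and deg: "degree s = degree s' + 2"
  shows "rat_sos_approximable s"
proof -
  obtain S where S: "\<And>n. weighted_sos (S n)" "\<And>n. degree (S n) \<le> degree s'"
    and S_lim: "coeffwise_tendsto (\<lambda>n. of_rat_poly (S n)) s'"
    using assms(2) unfolding rat_sos_approximable_def by blast
  obtain m where m: "\<And>n. of_rat (m n) > \<mu>" "(\<lambda>n. of_rat (m n)) \<longlonglongrightarrow> \<mu>"
    using rat_tendsto_from_above by blast
  obtain \<tau> where \<tau>: "(\<lambda>n. of_rat (\<tau> n)) \<longlonglongrightarrow> t"
    using rat_tendsto_from_above by blast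
  define P where "P n = [:m n:] + [:-\<tau> n, 1:]\<^sup>2 * S n" for n
  have "(0::real) < of_rat (m n)" for n using m(1)[of n] assms(1) by linarith
  then have "m n \<ge> 0" for n by (simp add: less_imp_le)
  then have "weighted_sos (P n)" for n
    unfolding P_def by (intro weighted_sos_add weighted_sos_const weighted_sos_square_mult S)
  moreover have "degree (P n) \<le> degree s" for n
  proof -
    have "degree ([:-\<tau> n, 1:]\<^sup>2 * S n) \<le> 2 + degree (S n)"
      by (rule order_trans[OF degree_mult_le]) (simp add: degree_linear_power)
    then show ?thesis
      unfolding P_def using S(2)[of n] deg by (intro degree_add_le) simp_all
  qed
  moreover have "coeffwise_tendsto (\<lambda>n. of_rat_poly (P n)) s"
  proof -
    have "coeffwise_tendsto (\<lambda>n. [:of_rat (m n):] + ([:- of_rat (\<tau> n):] + [:0, 1:])\<^sup>2 * of_rat_poly (S n))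
            ([:\<mu>:] + ([:-t:] + [:0, 1:])\<^sup>2 * s')"
      using m(2) \<tau> S_lim
      by (intro coeffwise_tendsto_add coeffwise_tendsto_mult coeffwise_tendsto_power
          coeffwise_tendsto_const_poly coeffwise_tendsto_const tendsto_minus)
    then show ?thesis by (simp add: P_def s of_rat_minus)
  qed
  ultimately show ?thesis unfolding rat_sos_approximable_def by blast
qed

lemma nonneg_poly_rat_sos_approximable:
  fixes s :: "real poly"
  assumes "\<And>x. poly s x \<ge> 0"
  shows "rat_sos_approximable s"
  using assms
proof (induction "degree s" arbitrary: s rule: less_induct)
  case less
  show ?case
  proof (cases "degree s = 0")
    case True
    then obtain c where "s = [:c:]" by (auto elim: degree_eq_zeroE)
    then show ?thesis
      using less.prems[of 0] by (simp add: rat_sos_approximable_const)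
  next
    case False
    then have "degree s > 0" by simp
    then obtain \<mu> s' t where \<mu>: "\<mu> \<ge> 0" and s': "\<And>x. poly s' x \<ge> 0"
      and deg: "degree s = degree s' + 2" and s: "s = [:\<mu>:] + [:-t, 1:]\<^sup>2 * s'"
      by (rule nonneg_poly_decompose[OF less.prems]) auto
    have "rat_sos_approximable s'"
      using less.hyps[OF _ s'] deg by simp
    from \<mu> this s deg show ?thesis
      by (rule rat_sos_approximable_add_square_mult)
  qed
qed

text \<open>Each monomial \<open>x\<^sup>k\<close> with \<open>k \<le> 2M\<close> is written as \<open>x\<^sup>i x\<^sup>j\<close> with \<open>i + j = k\<close>, and
  \<open>square_majorant M\<close> contains \<open>x\<^sup>2\<^sup>i + x\<^sup>2\<^sup>j\<close> for each such \<open>k\<close>.\<close>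
definition square_majorant :: "nat \<Rightarrow> rat poly" where
  "square_majorant M = (\<Sum>k\<le>2*M. (monom 1 (k div 2))\<^sup>2 + (monom 1 (k - k div 2))\<^sup>2)"

lemma degree_square_majorant: "degree (square_majorant M) \<le> 2 * M"
  unfolding square_majorant_def
  by (intro degree_sum_le degree_add_le) (auto simp: monom_power intro!: order.trans[OF degree_monom_le])

lemma weighted_sos_add_smult_square_majorant:
  assumes deg: "degree E \<le> 2 * M" and coeff: "\<And>k. \<bar>coeff E k\<bar> \<le> 2 * r"
  shows "weighted_sos (E + smult r (square_majorant M))"
proof -
  define a b where "a k = monom (1::rat) (k div 2)" and "b k = monom (1::rat) (k - k div 2)" for k
  have E_sum: "(\<Sum>k\<le>2*M. smult (coeff E k) (a k * b k)) = E"
    using poly_as_sum_of_monoms'[OF deg] by (simp add: a_def b_def mult_monom smult_monom)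
  have smult_sum_right: "smult r (sum F A) = (\<Sum>k\<in>A. smult r (F k))" for F :: "nat \<Rightarrow> rat poly" and A
    by (induction A rule: infinite_finite_induct) (simp_all add: smult_add_right)
  have "E + smult r (square_majorant M)
      = (\<Sum>k\<le>2*M. smult (coeff E k) (a k * b k)) + (\<Sum>k\<le>2*M. smult r ((a k)\<^sup>2 + (b k)\<^sup>2))"
    unfolding E_sum by (simp add: square_majorant_def a_def b_def smult_sum_right)
  also have "\<dots> = (\<Sum>k\<le>2*M. smult (coeff E k) (a k * b k) + smult r ((a k)\<^sup>2 + (b k)\<^sup>2))"
    by (rule sum.distrib[symmetric])
  also have "weighted_sos \<dots>"
    by (intro weighted_sos_sum weighted_sos_cross_term coeff)
  finally show ?thesis .
qed

text \<open>A rational weighted sum of squares close enough to \<open>p - r \<cdot> square_majorant M\<close> leaves an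
  error whose coefficients are absorbed by \<open>r \<cdot> square_majorant M\<close>.\<close>
lemma weighted_sos_if_dominates_square_majorant:
  fixes p :: "rat poly"
  assumes r: "r > 0"
    and nonneg: "\<And>x::real. poly (of_rat_poly (p - smult r (square_majorant M))) x \<ge> 0"
    and deg: "degree (p - smult r (square_majorant M)) \<le> 2 * M"
  shows "weighted_sos p"
proof -
  define q where "q = p - smult r (square_majorant M)"
  have nonneg_q: "\<And>x::real. poly (of_rat_poly q) x \<ge> 0"
    unfolding q_def by (rule nonneg)
  obtain P where P: "\<And>n. weighted_sos (P n)" "\<And>n. degree (P n) \<le> degree q"
    and lim: "coeffwise_tendsto (\<lambda>n. of_rat_poly (P n)) (of_rat_poly q :: real poly)"
    using nonneg_poly_rat_sos_approximable[OF nonneg_q] unfolding rat_sos_approximable_def by auto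
  have "\<forall>k\<in>{..2*M}. eventually
      (\<lambda>n. dist (of_rat (coeff (P n) k)) (of_rat (coeff q k) :: real) < of_rat (2 * r)) sequentially"
    using lim r unfolding coeffwise_tendsto_def by (intro ballI tendstoD) auto
  then have "eventually (\<lambda>n. \<forall>k\<in>{..2*M}.
      dist (of_rat (coeff (P n) k)) (of_rat (coeff q k) :: real) < of_rat (2 * r)) sequentially"
    by (intro eventually_ball_finite) auto
  moreover have "\<bar>of_rat x :: real\<bar> = of_rat \<bar>x\<bar>" for x
    by (simp add: abs_if of_rat_minus)
  ultimately obtain n where n: "\<And>k. k \<le> 2 * M \<Longrightarrow> \<bar>coeff (P n) k - coeff q k\<bar> < 2 * r"
    unfolding eventually_sequentially dist_real_def by (auto simp: of_rat_less simp flip: of_rat_diff)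
  define E where "E = q - P n"
  have deg_E: "degree E \<le> 2 * M"
    unfolding E_def using P(2)[of n] deg q_def by (intro degree_diff_le) auto
  have "\<bar>coeff E k\<bar> \<le> 2 * r" for k
  proof (cases "k \<le> 2 * M")
    case True
    then show ?thesis
      using n[OF True] by (simp add: E_def abs_minus_commute)
  next
    case False
    then show ?thesis using deg_E r by (simp add: coeff_eq_0)
  qed
  then have "weighted_sos (P n + (E + smult r (square_majorant M)))"
    by (intro weighted_sos_add P(1) weighted_sos_add_smult_square_majorant deg_E)
  then show ?thesis by (simp add: E_def q_def)
qed

lemma poly_abs_less_eventually:
  fixes a b :: "real poly"
  assumes nonneg: "\<And>x. poly b x \<ge> 0" and deg: "degree a < degree b"
  shows "eventually (\<lambda>x. \<bar>poly a x\<bar> < poly b x) at_infinity"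
proof -
  have "eventually (\<lambda>x. dist (poly a x / poly b x) 0 < 1) at_infinity"
    using poly_divide_tendsto_0_at_infinity[OF deg] by (rule tendstoD) simp
  moreover have "eventually (\<lambda>x. poly b x \<noteq> 0) at_infinity"
    using deg by (intro poly_eventually_not_zero) auto
  ultimately show ?thesis
  proof eventually_elim
    case (elim x)
    then have "poly b x > 0" using nonneg[of x] by linarith
    then show ?case using elim by (simp add: dist_real_def abs_divide pos_divide_less_eq)
  qed
qed

text \<open>Far out \<open>b\<close> dominates \<open>a\<close>; on the compact rest of \<open>{a \<le> 0}\<close> the quotient \<open>a / b\<close> is
  bounded because \<open>b\<close> does not vanish there.\<close>
lemma poly_add_large_multiple_pos_strict:
  fixes a b :: "real poly"
  assumes nonneg: "\<And>x. poly b x \<ge> 0" and pos: "\<And>x. poly b x = 0 \<Longrightarrow> poly a x > 0"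
    and deg: "degree a < degree b"
  obtains c where "\<And>c' x. c' \<ge> c \<Longrightarrow> poly a x + c' * poly b x > 0"
proof -
  obtain R where R: "\<And>x. norm x \<ge> R \<Longrightarrow> \<bar>poly a x\<bar> < poly b x"
    using poly_abs_less_eventually[OF nonneg deg] unfolding eventually_at_infinity by blast
  define K where "K = cball (0::real) R \<inter> {x. poly a x \<le> 0}"
  have b_pos: "poly b x > 0" if "x \<in> K" for x
    using that pos[of x] nonneg[of x] by (force simp: K_def)
  have "compact K"
    unfolding K_def by (intro compact_Int_closed closed_Collect_le continuous_intros) auto
  moreover have "continuous_on K (\<lambda>x. poly a x / poly b x)"
    using b_pos by (intro continuous_intros) (auto dest: b_pos)
  ultimately have "bounded ((\<lambda>x. poly a x / poly b x) ` K)"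
    by (intro compact_imp_bounded compact_continuous_image)
  then obtain C where C: "\<And>x. x \<in> K \<Longrightarrow> \<bar>poly a x / poly b x\<bar> \<le> C"
    unfolding bounded_iff by auto
  have "poly a x + c' * poly b x > 0" if c': "c' \<ge> \<bar>C\<bar> + 1" for c' x
  proof (cases "norm x \<ge> R \<or> poly a x > 0")
    case True
    have "poly b x \<le> c' * poly b x"
      using mult_right_mono[of 1 c' "poly b x"] c' nonneg[of x] by simp
    moreover have "poly a x > 0 \<or> - poly a x < poly b x"
      using True R[of x] by (auto simp: abs_less_iff)
    ultimately show ?thesis
      using nonneg[of x] by (cases "poly a x > 0") linarith+
  next
    case False
    then have "x \<in> K" by (auto simp: K_def)
    then have "- C \<le> poly a x / poly b x" using abs_le_D2[OF C[OF \<open>x \<in> K\<close>]] by linarith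
    then have "- C * poly b x \<le> poly a x"
      using b_pos[OF \<open>x \<in> K\<close>] by (simp add: pos_le_divide_eq)
    moreover have "(C + 1) * poly b x \<le> c' * poly b x"
      using c' b_pos[OF \<open>x \<in> K\<close>] by (intro mult_right_mono) auto
    ultimately show ?thesis using b_pos[OF \<open>x \<in> K\<close>] by (simp add: algebra_simps)
  qed
  then show ?thesis using that by blast
qed

lemma poly_add_large_multiple_pos:
  fixes a b :: "real poly"
  assumes nonneg: "\<And>x. poly b x \<ge> 0" and pos: "\<And>x. poly b x = 0 \<Longrightarrow> poly a x > 0"
    and deg: "degree a \<le> degree b" and "b \<noteq> 0"
  obtains c where "\<And>c' x. c' \<ge> c \<Longrightarrow> poly a x + c' * poly b x > 0"
proof -
  define \<kappa> where "\<kappa> = coeff a (degree b) / lead_coeff b"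
  define a' where "a' = a - smult \<kappa> b"
  have a: "poly a x = poly a' x + \<kappa> * poly b x" for x
    by (simp add: a'_def)
  have pos': "poly b x = 0 \<Longrightarrow> poly a' x > 0" for x
    using pos[of x] a[of x] by simp
  show ?thesis
  proof (cases "a' = 0")
    case True
    then have b_pos: "poly b x > 0" for x using pos'[of x] nonneg[of x] by force
    have "poly a x + c' * poly b x > 0" if "c' \<ge> \<bar>\<kappa>\<bar> + 1" for c' x
    proof -
      have "poly a x + c' * poly b x = (\<kappa> + c') * poly b x"
        using a[of x] True by (simp add: algebra_simps)
      also have "\<dots> > 0" using that b_pos[of x] by (intro mult_pos_pos) linarith+
      finally show ?thesis .
    qed
    then show ?thesis using that by blast
  next
    case False
    have "coeff a' (degree b) = 0" using \<open>b \<noteq> 0\<close> by (simp add: a'_def \<kappa>_def)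
    moreover have "degree a' \<le> degree b"
      unfolding a'_def using deg by (intro degree_diff_le) auto
    ultimately have "degree a' < degree b"
      using False by (metis le_neq_implies_less leading_coeff_0_iff)
    then obtain c where c: "\<And>c' x. c' \<ge> c \<Longrightarrow> poly a' x + c' * poly b x > 0"
      using poly_add_large_multiple_pos_strict[OF nonneg pos'] by blast
    have "poly a x + c' * poly b x > 0" if "c' \<ge> c + \<bar>\<kappa>\<bar>" for c' x
    proof -
      have "poly a x + c' * poly b x = poly a' x + (\<kappa> + c') * poly b x"
        using a[of x] by (simp add: algebra_simps)
      also have "\<dots> > 0" using that by (intro c) linarith
      finally show ?thesis .
    qed
    then show ?thesis using that by blast
  qed
qed

lemma exists_rat_pos_small:
  fixes u v :: "real \<Rightarrow> real"
  assumes "finite Z" "\<And>\<xi>. \<xi> \<in> Z \<Longrightarrow> u \<xi> > 0"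
  obtains r :: rat where "r > 0" "\<And>\<xi>. \<xi> \<in> Z \<Longrightarrow> of_rat r * v \<xi> < u \<xi>"
proof -
  have "\<forall>\<xi>\<in>Z. eventually (\<lambda>n. inverse (real (Suc n)) * v \<xi> < u \<xi>) sequentially"
  proof
    fix \<xi> assume "\<xi> \<in> Z"
    have "(\<lambda>n. inverse (real (Suc n)) * v \<xi>) \<longlonglongrightarrow> 0 * v \<xi>"
      by (intro tendsto_intros LIMSEQ_inverse_real_of_nat)
    then show "eventually (\<lambda>n. inverse (real (Suc n)) * v \<xi> < u \<xi>) sequentially"
      using assms(2)[OF \<open>\<xi> \<in> Z\<close>] by (intro order_tendstoD(2)) simp_all
  qed
  then have "eventually (\<lambda>n. \<forall>\<xi>\<in>Z. inverse (real (Suc n)) * v \<xi> < u \<xi>) sequentially"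
    using assms(1) by (intro eventually_ball_finite) auto
  then obtain n where "\<And>\<xi>. \<xi> \<in> Z \<Longrightarrow> inverse (real (Suc n)) * v \<xi> < u \<xi>"
    unfolding eventually_sequentially by blast
  moreover have "of_rat (inverse (of_nat (Suc n))) = inverse (real (Suc n))"
    by (simp add: of_rat_inverse of_rat_add)
  ultimately show ?thesis
    using that[of "inverse (of_nat (Suc n))"] by simp
qed

lemma weighted_sos_add_large_multiple:
  fixes p b :: "rat poly"
  assumes "r > 0" and deg_p: "degree (p - smult r (square_majorant M)) \<le> 2 * M"
    and "b \<noteq> 0" and deg_b: "degree b = 2 * M"
    and b_nonneg: "\<And>x::real. poly (of_rat_poly b) x \<ge> 0"
    and pos: "\<And>x::real. poly (of_rat_poly b) x = 0 \<Longrightarrow>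
                 poly (of_rat_poly (p - smult r (square_majorant M))) x > 0"
  obtains K :: nat where "weighted_sos (p + smult (of_nat K) b)"
proof -
  have "degree (of_rat_poly (p - smult r (square_majorant M)) :: real poly) \<le> degree (of_rat_poly b :: real poly)"
    "(of_rat_poly b :: real poly) \<noteq> 0"
    unfolding degree_of_rat_poly using deg_p deg_b \<open>b \<noteq> 0\<close> by simp_all
  then obtain c where c: "\<And>c' x::real. c' \<ge> c \<Longrightarrow>
      poly (of_rat_poly (p - smult r (square_majorant M))) x + c' * poly (of_rat_poly b) x > 0"
    using poly_add_large_multiple_pos[OF b_nonneg pos] by blast
  obtain K :: nat where "c \<le> real K" using real_arch_simple by blast
  have split: "p + smult (of_nat K) b - smult r (square_majorant M)
      = (p - smult r (square_majorant M)) + smult (of_nat K) b"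
    by simp
  have "degree (p + smult (of_nat K) b - smult r (square_majorant M)) \<le> 2 * M"
    unfolding split using deg_p deg_b
    by (intro degree_add_le) (auto intro: order.trans[OF degree_smult_le])
  moreover have "poly (of_rat_poly (p + smult (of_nat K) b - smult r (square_majorant M))) x \<ge> 0"
    for x :: real
    using c[OF \<open>c \<le> real K\<close>, of x] unfolding split by (simp add: less_imp_le)
  ultimately have "weighted_sos (p + smult (of_nat K) b)"
    by (intro weighted_sos_if_dominates_square_majorant[OF \<open>r > 0\<close>])
  then show ?thesis by (rule that)
qed

text \<open>With \<open>W = square_majorant M\<close>, pick \<open>r\<close> such that \<open>g - r W > 0\<close> at the real roots of \<open>e\<close>.
  Adding a large multiple of \<open>e\<^sup>2 (1 + x\<^sup>2)\<^sup>k\<close>, \<open>k = degree g\<close>, whose degree \<open>2M\<close> matches that of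
  \<open>W\<close>, makes \<open>g - r W\<close> positive everywhere without changing \<open>g\<close> modulo \<open>e\<close>.\<close>
lemma weighted_sos_congruent_if_pos_at_roots:
  fixes e g :: "rat poly"
  assumes "e \<noteq> 0" and pos: "\<And>\<xi>::real. poly (of_rat_poly e) \<xi> = 0 \<Longrightarrow> poly (of_rat_poly g) \<xi> > 0"
  obtains G where "weighted_sos G" "e dvd G - g"
proof -
  define M where "M = degree e + degree g"
  define W where "W = square_majorant M"
  define V :: "rat poly" where "V = [:1, 0, 1:] ^ degree g"
  define Z where "Z = {\<xi>::real. poly (of_rat_poly e) \<xi> = 0}"
  have "finite Z"
    unfolding Z_def using \<open>e \<noteq> 0\<close> by (intro poly_roots_finite) simp
  then obtain r :: rat where "r > 0"
    and r: "\<And>\<xi>. \<xi> \<in> Z \<Longrightarrow> of_rat r * poly (of_rat_poly W) \<xi> < poly (of_rat_poly g) \<xi>"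
    by (rule exists_rat_pos_small[where v = "poly (of_rat_poly W)"]) (auto simp: Z_def intro: pos)
  have V_pos: "poly (of_rat_poly V) x > (0::real)" for x
    by (simp add: V_def add_pos_nonneg)
  have "degree (g - smult r W) \<le> 2 * M"
    using degree_square_majorant[of M] by (intro degree_diff_le) (auto simp: W_def M_def)
  moreover have "e\<^sup>2 * V \<noteq> 0"
    using \<open>e \<noteq> 0\<close> by (simp add: V_def)
  moreover have "degree (e\<^sup>2 * V) = 2 * M"
    using \<open>e \<noteq> 0\<close> by (simp add: V_def M_def degree_mult_eq degree_power_eq)
  moreover have "poly (of_rat_poly (e\<^sup>2 * V)) x \<ge> (0::real)" for x
    using V_pos[of x] by simp
  moreover have "poly (of_rat_poly (g - smult r W)) x > (0::real)"
    if "poly (of_rat_poly (e\<^sup>2 * V)) x = 0" for x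
    using that V_pos[of x] r[of x] by (simp add: Z_def)
  ultimately obtain K :: nat where "weighted_sos (g + smult (of_nat K) (e\<^sup>2 * V))"
    unfolding W_def by (rule weighted_sos_add_large_multiple[OF \<open>r > 0\<close>])
  moreover have "e dvd (g + smult (of_nat K) (e\<^sup>2 * V)) - g"
    by (simp add: power2_eq_square mult.assoc dvd_smult)
  ultimately show ?thesis by (rule that)
qed

lemma bezout_coprime:
  fixes a b :: "'a::euclidean_ring_gcd"
  assumes "coprime a b"
  obtains u v where "u * a + v * b = 1"
  using assms bezout_coefficients_fst_snd[of a b] by simp

lemma coprime_no_common_root:
  fixes p q :: "rat poly" and x :: "'a::field_char_0"
  assumes "coprime p q" "poly (of_rat_poly p) x = 0"
  shows "poly (of_rat_poly q) x \<noteq> 0"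
proof
  obtain u v where "u * p + v * q = 1" using bezout_coprime[OF assms(1)] .
  then have "poly (of_rat_poly (u * p + v * q)) x = 1" by simp
  moreover assume "poly (of_rat_poly q) x = 0"
  ultimately show False using assms(2) by simp
qed

text \<open>Chinese remaindering with a square: \<open>(u d)\<^sup>2\<close> is \<open>\<equiv> 0 (mod d)\<close> and \<open>\<equiv> 1 (mod e)\<close>.\<close>
lemma weighted_sos_congruent_coprime_mult:
  fixes d e g G :: "rat poly"
  assumes "coprime d e" "d dvd g" "weighted_sos G" "e dvd G - g"
  obtains P where "weighted_sos P" "d * e dvd P - g"
proof -
  obtain u v where uv: "u * d + v * e = 1" using bezout_coprime[OF assms(1)] .
  define P where "P = (u * d)\<^sup>2 * G"
  have "d dvd P - g" using assms(2) by (simp add: P_def power2_eq_square)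
  moreover have "e dvd P - g"
  proof -
    have ud: "u * d = 1 - v * e" using uv by (simp add: eq_diff_eq)
    have "P - g = (G - g) - e * (v * (2 - v * e) * G)"
      unfolding P_def ud by (simp add: power2_eq_square algebra_simps)
    then show ?thesis using assms(4) by (simp only: dvd_diff dvd_triv_left)
  qed
  ultimately have "d * e dvd P - g" using assms(1) by (intro divides_mult)
  moreover have "weighted_sos P" unfolding P_def using assms(3) by (rule weighted_sos_square_mult)
  ultimately show ?thesis using that by blast
qed

lemma weighted_sos_mod_repr:
  fixes f P :: "rat poly"
  assumes "f \<noteq> 0" "weighted_sos P"
  shows "\<exists>(N::nat) (\<omega>::nat \<Rightarrow> rat) (h::nat \<Rightarrow> rat poly).
           (\<forall>i\<in>{1..N}. \<omega> i > 0 \<and> degree (h i) < degree f) \<and>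
           (\<Sum>i=1..N. smult (\<omega> i) ((h i)\<^sup>2)) mod f = P mod f"
proof (cases "degree f = 0")
  case True
  then have "P mod f = 0" using degree_mod_less[OF assms(1), of P] by auto
  then show ?thesis by (intro exI[of _ 0]) simp
next
  case False
  obtain N \<omega> and h :: "nat \<Rightarrow> rat poly"
    where \<omega>: "\<forall>i\<in>{1..N}. \<omega> i > 0" and P: "P = (\<Sum>i=1..N. smult (\<omega> i) ((h i)\<^sup>2))"
    using weighted_sos_sum_repr[OF assms(2)] by blast
  have "degree (h i mod f) < degree f" for i
    using False degree_mod_less[OF assms(1), of "h i"] by auto
  moreover have "(\<Sum>i=1..N. smult (\<omega> i) ((h i mod f)\<^sup>2)) mod f = P mod f"
  proof -
    have "(\<Sum>i=1..N. smult (\<omega> i) ((h i mod f)\<^sup>2)) mod f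
        = (\<Sum>i=1..N. smult (\<omega> i) ((h i mod f)\<^sup>2) mod f) mod f"
      by (rule mod_sum_eq[symmetric])
    also have "(\<Sum>i=1..N. smult (\<omega> i) ((h i mod f)\<^sup>2) mod f)
        = (\<Sum>i=1..N. smult (\<omega> i) ((h i)\<^sup>2) mod f)"
      by (rule sum.cong) (simp_all add: mod_smult_left power_mod)
    also have "(\<Sum>i=1..N. smult (\<omega> i) ((h i)\<^sup>2) mod f) mod f = P mod f"
      unfolding P by (rule mod_sum_eq)
    finally show ?thesis .
  qed
  ultimately show ?thesis
    using \<omega> by (intro exI[of _ N] exI[of _ \<omega>] exI[of _ "\<lambda>i. h i mod f"]) auto
qed

lemma coprime_div_gcd_imp_coprime:
  fixes f g :: "'a::euclidean_ring_gcd"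
  assumes "coprime (gcd f g) (f div gcd f g)"
  shows "coprime (f div gcd f g) g"
proof (rule coprimeI)
  fix c assume "c dvd f div gcd f g" "c dvd g"
  moreover from \<open>c dvd f div gcd f g\<close> have "c dvd gcd f g * (f div gcd f g)"
    by (rule dvd_mult)
  then have "c dvd f" by simp
  ultimately have "c dvd gcd f g" "c dvd f div gcd f g" by simp_all
  with assms show "is_unit c" by (rule coprime_common_divisor)
qed

theorem mainTheorem1:
  fixes f g :: "rat poly" and n :: nat
  assumes "f \<noteq> 0"
    and "degree f = n"
    and "coprime (gcd f g) (f div gcd f g)"
    and "\<And>\<xi>::real. poly (map_poly of_rat f) \<xi> = 0 \<Longrightarrow> poly (map_poly of_rat g) \<xi> \<ge> 0"
  shows "\<exists>(N::nat) (\<omega>::nat \<Rightarrow> rat) (h::nat \<Rightarrow> rat poly).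
           (\<forall>i\<in>{1..N}. \<omega> i > 0 \<and> degree (h i) < n) \<and>
           (\<Sum>i=1..N. smult (\<omega> i) ((h i)\<^sup>2)) mod f = g mod f"
proof -
  define d where "d = gcd f g"
  define e where "e = f div d"
  have f: "f = d * e" by (simp add: d_def e_def)
  have "coprime d e" using assms(3) by (simp add: d_def e_def)
  have "d dvd g" by (simp add: d_def)
  have "e \<noteq> 0" using assms(1) f by auto
  have "coprime e g"
    using coprime_div_gcd_imp_coprime[OF assms(3)] by (simp add: d_def e_def)
  have "poly (of_rat_poly g) \<xi> > 0" if "poly (of_rat_poly e) \<xi> = 0" for \<xi> :: real
  proof -
    have "poly (of_rat_poly f) \<xi> = 0" using that by (simp add: f)
    then show ?thesis
      using assms(4) coprime_no_common_root[OF \<open>coprime e g\<close> that] by force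
  qed
  then obtain G where "weighted_sos G" "e dvd G - g"
    using weighted_sos_congruent_if_pos_at_roots[OF \<open>e \<noteq> 0\<close>] by blast
  then obtain P where "weighted_sos P" "d * e dvd P - g"
    using weighted_sos_congruent_coprime_mult[OF \<open>coprime d e\<close> \<open>d dvd g\<close>] by blast
  then have "P mod f = g mod f"
    by (simp add: f mod_eq_dvd_iff)
  then show ?thesis
    using weighted_sos_mod_repr[OF \<open>f \<noteq> 0\<close> \<open>weighted_sos P\<close>] assms(2) by simp
qed

end
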